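(* Let $p$ be an integer with $p>2$ and let $G$ be a graph with at least one vertex. Then $\mathrm{id}^{\leq p}(G) \leq \frac{1}{p-1}|E(G)| + \frac{p-2}{p-1}(|V(G)|-1)$.
   Context: All graphs are finite and simple. For an oriented graph $D$ and a set $X\subseteq V(D)$, the inversion of $X$ reverses the orientation of every arc with both endvertices in $X$. For an integer $p\ge 2$, a $(\leq p)$-inversion is the inversion of a set of at most $p$ vertices. For a graph $G$, $\mathrm{id}^{\leq p}(G)$ (the $(\leq p)$-inversion diameter) is the maximum, over all ordered pairs $(\vec G_1,\vec G_2)$ of orientations of $G$ (on the same labelled vertex set), of the minimum number of $(\leq p)$-inversions whose successive application transforms $\vec G_1$ into $\vec G_2$. *)

theory Defs
  imports Complex_Main
begin

definition simple_graph :: "'a set \<Rightarrow> 'a set set \<Rightarrow> bool" where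
  "simple_graph V E \<longleftrightarrow> finite V \<and>
     (\<forall>e\<in>E. \<exists>u v. e = {u, v} \<and> u \<noteq> v \<and> u \<in> V \<and> v \<in> V)"

definition orientation :: "'a set \<Rightarrow> 'a set set \<Rightarrow> ('a \<times> 'a) set \<Rightarrow> bool" where
  "orientation V E D \<longleftrightarrow>
     (\<forall>(u, v)\<in>D. {u, v} \<in> E) \<and>
     (\<forall>u v. {u, v} \<in> E \<and> u \<noteq> v \<longrightarrow> ((u, v) \<in> D \<longleftrightarrow> (v, u) \<notin> D))"

definition invert :: "('a \<times> 'a) set \<Rightarrow> 'a set \<Rightarrow> ('a \<times> 'a) set" where
  "invert D X = {(u, v). (u, v) \<in> D \<and> \<not> (u \<in> X \<and> v \<in> X)}
              \<union> {(v, u) | u v. (u, v) \<in> D \<and> u \<in> X \<and> v \<in> X}"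

definition le_p_inversion_set :: "nat \<Rightarrow> 'a set \<Rightarrow> 'a set \<Rightarrow> bool" where
  "le_p_inversion_set p V X \<longleftrightarrow> X \<subseteq> V \<and> card X \<le> p"

definition inv_dist :: "nat \<Rightarrow> 'a set \<Rightarrow> ('a \<times> 'a) set \<Rightarrow> ('a \<times> 'a) set \<Rightarrow> nat" where
  "inv_dist p V D1 D2 = (LEAST k. \<exists>Xs. length Xs = k \<and>
      (\<forall>X\<in>set Xs. le_p_inversion_set p V X) \<and> foldl invert D1 Xs = D2)"

definition inv_diam :: "nat \<Rightarrow> 'a set \<Rightarrow> 'a set set \<Rightarrow> nat" where
  "inv_diam p V E = Max {inv_dist p V D1 D2 | D1 D2. orientation V E D1 \<and> orientation V E D2}"

end

theory Submission
  imports Defs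
begin

(* The inversions X_1, ..., X_k turn D1 into D2 exactly when every edge lies in an odd number
   of the X_i if it is reversed between D1 and D2 and in an even number otherwise.  Such a list
   is built vertex by vertex.  When a vertex x is added, its b neighbours u for which {x, u}
   must be reversed are split into ceil(b / (p - 1)) groups of at most p - 1 vertices, and each
   group is inverted together with x.  This settles every edge at x with at most
   (b + p - 2) / (p - 1) inversions; the edges inside the groups that were reversed on the way
   are corrected, by adjusting the parity requirement, when the remaining vertices are
   handled.  Summing over the vertices gives (p - 1) k <= |E| + (p - 2) (|V| - 1). *)

definition reversal_count :: "'a set \<Rightarrow> 'a set list \<Rightarrow> nat" where
  "reversal_count e Xs = length (filter (\<lambda>X. e \<subseteq> X) Xs)"

lemma reversal_count_append [simp]:
  "reversal_count e (Xs @ Ys) = reversal_count e Xs + reversal_count e Ys"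
  by (simp add: reversal_count_def)

lemma mem_invert_iff:
  "(a, b) \<in> invert D X \<longleftrightarrow> (if a \<in> X \<and> b \<in> X then (b, a) \<in> D else (a, b) \<in> D)"
  unfolding invert_def by auto

lemma mem_foldl_invert_iff:
  "(a, b) \<in> foldl invert D Xs \<longleftrightarrow>
     (if even (reversal_count {a, b} Xs) then (a, b) \<in> D else (b, a) \<in> D)"
proof (induction Xs arbitrary: D)
  case Nil
  then show ?case by (simp add: reversal_count_def)
next
  case (Cons X Xs)
  then show ?case by (auto simp: reversal_count_def mem_invert_iff)
qed

lemma orientation_arc_edge:
  assumes "orientation V E D" "(a, b) \<in> D"
  shows "{a, b} \<in> E"
  using assms unfolding orientation_def by blast

definition reversed_edges :: "('a \<times> 'a) set \<Rightarrow> ('a \<times> 'a) set \<Rightarrow> 'a set set" where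
  "reversed_edges D1 D2 = {{a, b} | a b. (a, b) \<in> D1 \<and> (b, a) \<in> D2}"

lemma foldl_invert_eq_if_odd_on_reversed_edges:
  assumes D1: "orientation V E D1" and D2: "orientation V E D2"
    and "\<forall>e\<in>E. card e = 2"
    and odd: "\<forall>e\<in>E. odd (reversal_count e Xs) \<longleftrightarrow> e \<in> reversed_edges D1 D2"
  shows "foldl invert D1 Xs = D2"
proof (intro set_eqI)
  fix z :: "'a \<times> 'a"
  obtain a b where z: "z = (a, b)" by (cases z)
  show "z \<in> foldl invert D1 Xs \<longleftrightarrow> z \<in> D2"
  proof (cases "{a, b} \<in> E")
    case True
    then have "a \<noteq> b"
      using assms(3) by fastforce
    with True D1 D2 have "(a, b) \<in> D1 \<longleftrightarrow> (b, a) \<notin> D1" "(a, b) \<in> D2 \<longleftrightarrow> (b, a) \<notin> D2"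
      unfolding orientation_def by blast+
    moreover have "{a, b} \<in> reversed_edges D1 D2 \<longleftrightarrow>
        (a, b) \<in> D1 \<and> (b, a) \<in> D2 \<or> (b, a) \<in> D1 \<and> (a, b) \<in> D2"
      unfolding reversed_edges_def by (auto simp: doubleton_eq_iff)
    ultimately show ?thesis
      using odd True unfolding z mem_foldl_invert_iff by auto
  next
    case False
    then have "(a, b) \<notin> D1" "(b, a) \<notin> D1" "(a, b) \<notin> D2"
      using orientation_arc_edge[OF D1] orientation_arc_edge[OF D2] by (metis insert_commute)+
    then show ?thesis
      unfolding z mem_foldl_invert_iff by auto
  qed
qed

lemma exists_partition_into_blocks_card_le:
  assumes "finite B" "1 \<le> q"
  shows "\<exists>gs. (\<forall>g\<in>set gs. g \<subseteq> B \<and> card g \<le> q) \<and>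
     (\<forall>u. length (filter (\<lambda>g. u \<in> g) gs) = (if u \<in> B then 1 else 0)) \<and>
     q * length gs \<le> card B + q - 1"
  using assms
proof (induction "card B" arbitrary: B rule: less_induct)
  case less
  show ?case
  proof (cases "card B \<le> q")
    case True
    show ?thesis
    proof (cases "B = {}")
      case True
      then show ?thesis by (intro exI[of _ "[]"]) auto
    next
      case False
      then have "1 \<le> card B" using less.prems by (simp add: Suc_leI card_gt_0_iff)
      with \<open>card B \<le> q\<close> show ?thesis by (intro exI[of _ "[B]"]) auto
    qed
  next
    case False
    then obtain S where S: "S \<subseteq> B" "card S = q"
      by (meson nat_le_linear obtain_subset_with_card_n)
    have card_rest: "card (B - S) = card B - q"
      using S less.prems by (simp add: card_Diff_subset finite_subset)
    with False obtain gs where gs: "\<forall>g\<in>set gs. g \<subseteq> B - S \<and> card g \<le> q"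
        "\<forall>u. length (filter (\<lambda>g. u \<in> g) gs) = (if u \<in> B - S then 1 else 0)"
        "q * length gs \<le> card (B - S) + q - 1"
      using less.hyps[of "B - S"] less.prems by auto
    have "length (filter (\<lambda>g. u \<in> g) (S # gs)) = (if u \<in> B then 1 else 0)" for u
      using gs(2)[rule_format, of u] S(1) by auto
    moreover have "q * length (S # gs) \<le> card B + q - 1"
      using gs(3) card_rest False by simp
    ultimately show ?thesis using gs(1) S by (intro exI[of _ "S # gs"]) auto
  qed
qed

lemma exists_star_inversions:
  assumes "finite B" "x \<notin> B" "1 \<le> q"
  shows "\<exists>Ys. (\<forall>Y\<in>set Ys. Y \<subseteq> insert x B \<and> card Y \<le> q + 1) \<and>
     (\<forall>w. w \<noteq> x \<longrightarrow> reversal_count {x, w} Ys = (if w \<in> B then 1 else 0)) \<and>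
     q * length Ys \<le> card B + q - 1"
proof -
  obtain gs where gs: "\<forall>g\<in>set gs. g \<subseteq> B \<and> card g \<le> q"
      "\<forall>u. length (filter (\<lambda>g. u \<in> g) gs) = (if u \<in> B then 1 else 0)"
      "q * length gs \<le> card B + q - 1"
    using exists_partition_into_blocks_card_le[OF assms(1,3)] by blast
  have "card (insert x g) \<le> q + 1" if "g \<in> set gs" for g
    using gs(1) that finite_subset[OF _ assms(1)] by (auto simp: card_insert_if)
  moreover have "reversal_count {x, w} (map (insert x) gs) = (if w \<in> B then 1 else 0)"
    if "w \<noteq> x" for w
  proof -
    have "reversal_count {x, w} (map (insert x) gs) = length (filter (\<lambda>g. w \<in> g) gs)"
      unfolding reversal_count_def filter_map length_map
      by (rule arg_cong[where f = length], rule filter_cong) (use that in auto)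
    with gs(2) show ?thesis by simp
  qed
  ultimately show ?thesis
    using gs(1,3) by (intro exI[of _ "map (insert x) gs"]) auto
qed

lemma card_edges_insert_vertex_ge:
  assumes "finite F" "x \<notin> F" "B \<subseteq> F" "\<forall>u\<in>B. {x, u} \<in> E"
  shows "card {e\<in>E. e \<subseteq> F} + card B \<le> card {e\<in>E. e \<subseteq> insert x F}"
proof -
  let ?star = "(\<lambda>u. {x, u}) ` B"
  have fin: "finite {e\<in>E. e \<subseteq> insert x F}"
    by (rule finite_subset[of _ "Pow (insert x F)"]) (use assms(1) in auto)
  have sub: "{e\<in>E. e \<subseteq> F} \<union> ?star \<subseteq> {e\<in>E. e \<subseteq> insert x F}"
    using assms(3,4) by auto
  have "inj_on (\<lambda>u. {x, u}) B"
    by (rule inj_onI) (use assms(2,3) in \<open>auto simp: doubleton_eq_iff\<close>)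
  moreover have "{e\<in>E. e \<subseteq> F} \<inter> ?star = {}"
    using assms(2) by auto
  ultimately have "card {e\<in>E. e \<subseteq> F} + card B = card ({e\<in>E. e \<subseteq> F} \<union> ?star)"
    using finite_subset[OF sub fin] by (simp add: card_Un_disjoint card_image)
  also have "\<dots> \<le> card {e\<in>E. e \<subseteq> insert x F}"
    using card_mono[OF fin sub] .
  finally show ?thesis .
qed

lemma edge_at_new_vertex:
  assumes "card e = 2" "e \<subseteq> insert x F" "\<not> e \<subseteq> F"
  obtains w where "w \<in> F" "w \<noteq> x" "e = {x, w}"
proof -
  obtain u v where uv: "e = {u, v}" "u \<noteq> v"
    using assms(1) by (auto simp: card_2_iff)
  with assms(2,3) consider "u = x" "v \<in> F" | "v = x" "u \<in> F"
    by auto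
  then show ?thesis
    using that uv by cases (auto simp: insert_commute)
qed

lemma exists_inversions_with_odd_reversals:
  assumes "finite W" "W \<noteq> {}" "2 \<le> p" "\<forall>e\<in>E. card e = 2"
  shows "\<exists>Xs. (\<forall>X\<in>set Xs. X \<subseteq> W \<and> card X \<le> p) \<and>
     (\<forall>e\<in>E. e \<subseteq> W \<longrightarrow> (odd (reversal_count e Xs) \<longleftrightarrow> T e)) \<and>
     (p - 1) * length Xs \<le> card {e\<in>E. e \<subseteq> W} + (p - 2) * (card W - 1)"
  using assms(1,2)
proof (induction W arbitrary: T rule: finite_ne_induct)
  case (singleton x)
  have "\<not> e \<subseteq> {x}" if "e \<in> E" for e
    using assms(4) that by (auto simp: subset_singleton_iff)
  then show ?case by (intro exI[of _ "[]"]) auto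
next
  case (insert x F)
  define B where "B = {u\<in>F. {x, u} \<in> E \<and> T {x, u}}"
  have "finite B" "x \<notin> B" "B \<subseteq> F" "1 \<le> p - 1"
    using insert.hyps(1,3) assms(3) by (auto simp: B_def)
  obtain Ys where Ys: "\<forall>Y\<in>set Ys. Y \<subseteq> insert x B \<and> card Y \<le> p - 1 + 1"
      "\<forall>w. w \<noteq> x \<longrightarrow> reversal_count {x, w} Ys = (if w \<in> B then 1 else 0)"
      "(p - 1) * length Ys \<le> card B + (p - 1) - 1"
    using exists_star_inversions[OF \<open>finite B\<close> \<open>x \<notin> B\<close> \<open>1 \<le> p - 1\<close>] by (elim exE conjE)
  \<comment> \<open>the groups of \<open>Ys\<close> may also have reversed edges inside \<open>F\<close>; \<open>Zs\<close> has to undo them\<close>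
  define T' where "T' e \<longleftrightarrow> T e \<noteq> odd (reversal_count e Ys)" for e
  obtain Zs where Zs: "\<forall>Z\<in>set Zs. Z \<subseteq> F \<and> card Z \<le> p"
      "\<forall>e\<in>E. e \<subseteq> F \<longrightarrow> (odd (reversal_count e Zs) \<longleftrightarrow> T' e)"
      "(p - 1) * length Zs \<le> card {e\<in>E. e \<subseteq> F} + (p - 2) * (card F - 1)"
    using insert.IH[of T'] by blast
  have "\<forall>X\<in>set (Ys @ Zs). X \<subseteq> insert x F \<and> card X \<le> p"
    using Ys(1) Zs(1) \<open>B \<subseteq> F\<close> assms(3) by force
  moreover have "odd (reversal_count e (Ys @ Zs)) \<longleftrightarrow> T e"
    if e: "e \<in> E" "e \<subseteq> insert x F" for e
  proof (cases "e \<subseteq> F")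
    case True
    with Zs(2) e(1) show ?thesis by (auto simp: T'_def)
  next
    case False
    with assms(4) e obtain w where w: "w \<in> F" "w \<noteq> x" "e = {x, w}"
      by (blast elim: edge_at_new_vertex)
    have "reversal_count {x, w} Zs = 0"
      using Zs(1) insert.hyps(3) by (auto simp: reversal_count_def filter_empty_conv)
    with Ys(2) w e(1) show ?thesis by (auto simp: B_def)
  qed
  moreover have "(p - 1) * length (Ys @ Zs)
      \<le> card {e\<in>E. e \<subseteq> insert x F} + (p - 2) * (card (insert x F) - 1)"
  proof -
    have "card {e\<in>E. e \<subseteq> F} + card B \<le> card {e\<in>E. e \<subseteq> insert x F}"
      using card_edges_insert_vertex_ge[OF insert.hyps(1,3) \<open>B \<subseteq> F\<close>] by (auto simp: B_def)
    moreover have "card (insert x F) - 1 = (card F - 1) + 1"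
      using insert.hyps card_gt_0_iff[of F] by simp
    then have "(p - 2) * (card (insert x F) - 1) = (p - 2) * (card F - 1) + (p - 2)"
      by (simp only: distrib_left mult_1_right)
    ultimately show ?thesis
      unfolding length_append add_mult_distrib2 using Ys(3) Zs(3) assms(3) by linarith
  qed
  ultimately show ?case by blast
qed

lemma simple_graph_edge:
  assumes "simple_graph V E" "e \<in> E"
  shows "card e = 2" "e \<subseteq> V"
proof -
  obtain u v where "e = {u, v}" "u \<noteq> v" "u \<in> V" "v \<in> V"
    using assms unfolding simple_graph_def by blast
  then show "card e = 2" "e \<subseteq> V" by auto
qed

lemma orientation_subset:
  assumes "simple_graph V E" "orientation V E D"
  shows "D \<subseteq> V \<times> V"
proof clarify
  fix a b
  assume "(a, b) \<in> D"
  then have "{a, b} \<subseteq> V"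
    using simple_graph_edge(2)[OF assms(1)] orientation_arc_edge[OF assms(2)] by blast
  then show "a \<in> V \<and> b \<in> V" by auto
qed

lemma orientation_exists:
  assumes "simple_graph V E"
  shows "\<exists>D. orientation V E D"
proof -
  obtain f :: "'a \<Rightarrow> nat" and n where f: "inj_on f V"
    using finite_imp_inj_to_nat_seg assms unfolding simple_graph_def by metis
  have "orientation V E {(u, v). {u, v} \<in> E \<and> f u < f v}"
    unfolding orientation_def
  proof (intro conjI allI impI)
    fix u v
    assume uv: "{u, v} \<in> E \<and> u \<noteq> v"
    then have "f u \<noteq> f v"
      using simple_graph_edge(2)[OF assms] f by (metis inj_onD insert_subset)
    with uv show "(u, v) \<in> {(u, v). {u, v} \<in> E \<and> f u < f v} \<longleftrightarrow>
        (v, u) \<notin> {(u, v). {u, v} \<in> E \<and> f u < f v}"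
      by (auto simp: insert_commute)
  qed auto
  then show ?thesis ..
qed

lemma inv_diam_attained:
  assumes "simple_graph V E"
  obtains D1 D2 where "orientation V E D1" "orientation V E D2"
    "inv_diam p V E = inv_dist p V D1 D2"
proof -
  let ?S = "{inv_dist p V D1 D2 | D1 D2. orientation V E D1 \<and> orientation V E D2}"
  have "finite (V \<times> V)"
    using assms unfolding simple_graph_def by simp
  moreover have "?S \<subseteq> (\<lambda>(D1, D2). inv_dist p V D1 D2) ` (Pow (V \<times> V) \<times> Pow (V \<times> V))"
    using orientation_subset[OF assms] by fastforce
  ultimately have "finite ?S"
    by (meson finite_Pow_iff finite_SigmaI finite_imageI finite_subset)
  moreover have "?S \<noteq> {}"
    using orientation_exists[OF assms] by blast
  ultimately have "Max ?S \<in> ?S"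
    by (rule Max_in)
  then show ?thesis
    using that unfolding inv_diam_def by blast
qed

lemma inv_dist_foldl_invert_le:
  assumes "\<forall>X\<in>set Xs. X \<subseteq> V \<and> card X \<le> p"
  shows "inv_dist p V D (foldl invert D Xs) \<le> length Xs"
  unfolding inv_dist_def
  by (rule Least_le) (use assms in \<open>auto simp: le_p_inversion_set_def\<close>)

lemma inv_dist_bound:
  assumes "2 \<le> p" "simple_graph V E" "V \<noteq> {}"
    and D1: "orientation V E D1" and D2: "orientation V E D2"
  shows "(p - 1) * inv_dist p V D1 D2 \<le> card E + (p - 2) * (card V - 1)"
proof -
  have "finite V" "\<forall>e\<in>E. card e = 2" "{e\<in>E. e \<subseteq> V} = E"
    using assms(2) simple_graph_edge[OF assms(2)] unfolding simple_graph_def by auto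
  then obtain Xs where Xs: "\<forall>X\<in>set Xs. X \<subseteq> V \<and> card X \<le> p"
      "\<forall>e\<in>E. e \<subseteq> V \<longrightarrow> (odd (reversal_count e Xs) \<longleftrightarrow> e \<in> reversed_edges D1 D2)"
      "(p - 1) * length Xs \<le> card E + (p - 2) * (card V - 1)"
    using exists_inversions_with_odd_reversals[of V p E "\<lambda>e. e \<in> reversed_edges D1 D2"] assms(1,3)
    by auto
  have "foldl invert D1 Xs = D2"
    using foldl_invert_eq_if_odd_on_reversed_edges[OF D1 D2] Xs(2) simple_graph_edge[OF assms(2)]
    by blast
  then have "inv_dist p V D1 D2 \<le> length Xs"
    using inv_dist_foldl_invert_le[OF Xs(1), of D1] by simp
  then show ?thesis
    using Xs(3) by (meson le_trans mult_le_mono2)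
qed

theorem mainTheorem3:
  fixes p :: nat and V :: "'a set" and E :: "'a set set"
  assumes "p > 2" and "simple_graph V E" and "V \<noteq> {}"
  shows "real (inv_diam p V E)
           \<le> real (card E) / (real p - 1) + (real p - 2) / (real p - 1) * (real (card V) - 1)"
proof -
  obtain D1 D2 where D1: "orientation V E D1" and D2: "orientation V E D2"
      and diam: "inv_diam p V E = inv_dist p V D1 D2"
    using inv_diam_attained[OF assms(2)] .
  have "(p - 1) * inv_diam p V E \<le> card E + (p - 2) * (card V - 1)"
    using inv_dist_bound[OF _ assms(2,3) D1 D2] assms(1) diam by simp
  then have "real ((p - 1) * inv_diam p V E) \<le> real (card E + (p - 2) * (card V - 1))"
    by (rule of_nat_mono)
  moreover have "1 \<le> card V"
    using assms(2,3) unfolding simple_graph_def by (simp add: Suc_leI card_gt_0_iff)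
  ultimately have "(real p - 1) * real (inv_diam p V E)
      \<le> real (card E) + (real p - 2) * (real (card V) - 1)"
    using assms(1) by (simp add: of_nat_diff)
  moreover have "real (card E) / (real p - 1) + (real p - 2) / (real p - 1) * (real (card V) - 1)
      = (real (card E) + (real p - 2) * (real (card V) - 1)) / (real p - 1)"
    by (simp add: add_divide_distrib)
  ultimately show ?thesis
    using assms(1) by (simp add: pos_le_divide_eq mult.commute)
qed

end
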